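(* Suppose $\mathcal{U}$ is a compatible uniformity for a space $X$ and $\kappa$ is a cardinal. If $A\subseteq X$ is totally bounded and $\mathcal{U}$ (ordered by reverse inclusion) has calibre $(\kappa^+,\omega)$, then $w(A)\le\kappa$.
   Context: All spaces are Tychonoff. A subset $A$ is totally bounded if for every $U\in\mathcal{U}$ there is finite $F\subseteq A$ with $A\subseteq\bigcup_{x\in F}U[x]$, where $U[x]=\{y:(x,y)\in U\}$. A directed set $P$ has calibre $(\mu,\lambda)$ if every subset of $P$ of size $\mu$ contains a subset of size $\lambda$ with an upper bound in $P$. $w(A)$ is the weight (least size of a base) of $A$ as a subspace. *)

theory Defs
  imports "HOL-Analysis.Analysis"
begin

definition Tychonoff_space :: "'a topology \<Rightarrow> bool" where
  "Tychonoff_space X \<longleftrightarrow> completely_regular_space X \<and> t1_space X"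

definition uniformity_on :: "'a set \<Rightarrow> ('a \<times> 'a) set set \<Rightarrow> bool" where
  "uniformity_on S \<U> \<longleftrightarrow>
     \<U> \<noteq> {} \<and>
     (\<forall>V\<in>\<U>. Id_on S \<subseteq> V \<and> V \<subseteq> S \<times> S) \<and>
     (\<forall>V\<in>\<U>. \<forall>W. V \<subseteq> W \<and> W \<subseteq> S \<times> S \<longrightarrow> W \<in> \<U>) \<and>
     (\<forall>V\<in>\<U>. \<forall>W\<in>\<U>. V \<inter> W \<in> \<U>) \<and>
     (\<forall>V\<in>\<U>. V\<inverse> \<in> \<U>) \<and>
     (\<forall>V\<in>\<U>. \<exists>W\<in>\<U>. W O W \<subseteq> V)"

text \<open>A uniformity compatible with the topology of X: it induces exactly the open sets of X.
  Here \<open>V `` {x}\<close> is U[x].\<close>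
definition compatible_uniformity :: "'a topology \<Rightarrow> ('a \<times> 'a) set set \<Rightarrow> bool" where
  "compatible_uniformity X \<U> \<longleftrightarrow>
     uniformity_on (topspace X) \<U> \<and>
     (\<forall>G. openin X G \<longleftrightarrow> G \<subseteq> topspace X \<and> (\<forall>x\<in>G. \<exists>V\<in>\<U>. V `` {x} \<subseteq> G))"

definition totally_bounded_in :: "('a \<times> 'a) set set \<Rightarrow> 'a set \<Rightarrow> bool" where
  "totally_bounded_in \<U> A \<longleftrightarrow>
     (\<forall>V\<in>\<U>. \<exists>F. finite F \<and> F \<subseteq> A \<and> A \<subseteq> (\<Union>x\<in>F. V `` {x}))"

text \<open>Calibre (kappa^+, omega) of U ordered by reverse inclusion (kappa = |K|):
  every subfamily of size kappa^+ contains a countably infinite subfamily with an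
  upper bound, i.e. some V in U contained in all its members.\<close>
definition calibre_succ_omega :: "('a \<times> 'a) set set \<Rightarrow> 'k set \<Rightarrow> bool" where
  "calibre_succ_omega \<U> K \<longleftrightarrow>
     (\<forall>S \<subseteq> \<U>. ordIso2 (card_of S) (cardSuc (card_of K)) \<longrightarrow>
        (\<exists>T \<subseteq> S. infinite T \<and> countable T \<and> (\<exists>V\<in>\<U>. \<forall>W\<in>T. V \<subseteq> W)))"

definition base_of_top :: "'a topology \<Rightarrow> 'a set set \<Rightarrow> bool" where
  "base_of_top X \<B> \<longleftrightarrow> (\<forall>B\<in>\<B>. openin X B) \<and>
     (\<forall>G x. openin X G \<and> x \<in> G \<longrightarrow> (\<exists>B\<in>\<B>. x \<in> B \<and> B \<subseteq> G))"

definition weight_le :: "'a topology \<Rightarrow> 'k set \<Rightarrow> bool" where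
  "weight_le X K \<longleftrightarrow> (\<exists>\<B>. base_of_top X \<B> \<and> ordLeq2 (card_of \<B>) (card_of K))"

end

(*
  Call two entourages independent on A if neither trace on A lies in the cube of the other,
  and let M be a maximal family of pairwise independent entourages. If |M| > kappa, the
  calibre yields infinitely many members of M above one entourage V. Take a symmetric W
  with W O W \<subseteq> V and a finite W-net F of A: the pairs of F linked, through W-neighbours
  in A, by a member of M form a subset of F \<times> F, so two members share this pattern, and
  then each one's trace lies in the cube of the other, contradicting independence. Hence
  |M| \<le> kappa, and by maximality the traces of M are cofinal in the traces of the
  uniformity (for V pick W with W O W O W \<subseteq> V). For infinite kappa, the interiors of
  the balls P[x], with P in M and x in a finite net for P, form a base of A of size at most
  kappa. For finite kappa the calibre forces the uniformity itself to be finite, so X is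
  discrete and |A| is at most the number of entourages.
*)

theory Submission
  imports Defs
begin

unbundle cardinal_syntax

lemma uniformity_on_nonempty: "uniformity_on S \<U> \<Longrightarrow> \<U> \<noteq> {}"
  unfolding uniformity_on_def by (elim conjE)

lemma uniformity_on_subset: "uniformity_on S \<U> \<Longrightarrow> V \<in> \<U> \<Longrightarrow> V \<subseteq> S \<times> S"
  unfolding uniformity_on_def by (elim conjE) meson

lemma uniformity_on_Id_on: "uniformity_on S \<U> \<Longrightarrow> V \<in> \<U> \<Longrightarrow> Id_on S \<subseteq> V"
  unfolding uniformity_on_def by (elim conjE) meson

lemma uniformity_on_refl: "uniformity_on S \<U> \<Longrightarrow> V \<in> \<U> \<Longrightarrow> x \<in> S \<Longrightarrow> (x, x) \<in> V"
  using uniformity_on_Id_on by blast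

lemma uniformity_on_superset:
  "uniformity_on S \<U> \<Longrightarrow> V \<in> \<U> \<Longrightarrow> V \<subseteq> W \<Longrightarrow> W \<subseteq> S \<times> S \<Longrightarrow> W \<in> \<U>"
  unfolding uniformity_on_def by (elim conjE) meson

lemma uniformity_on_Int: "uniformity_on S \<U> \<Longrightarrow> V \<in> \<U> \<Longrightarrow> W \<in> \<U> \<Longrightarrow> V \<inter> W \<in> \<U>"
  unfolding uniformity_on_def by (elim conjE) meson

lemma uniformity_on_converse: "uniformity_on S \<U> \<Longrightarrow> V \<in> \<U> \<Longrightarrow> V\<inverse> \<in> \<U>"
  unfolding uniformity_on_def by (elim conjE) meson

lemma uniformity_on_half: "uniformity_on S \<U> \<Longrightarrow> V \<in> \<U> \<Longrightarrow> \<exists>W\<in>\<U>. W O W \<subseteq> V"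
  unfolding uniformity_on_def by (elim conjE) meson

lemma uniformity_on_subset_relcomp:
  assumes "uniformity_on S \<U>" "V \<in> \<U>"
  shows "V \<subseteq> V O V"
  using uniformity_on_subset[OF assms] uniformity_on_refl[OF assms] by auto

lemma uniformity_on_symmetric_half:
  assumes "uniformity_on S \<U>" "V \<in> \<U>"
  shows "\<exists>W\<in>\<U>. W\<inverse> = W \<and> W O W \<subseteq> V"
proof -
  obtain W where W: "W \<in> \<U>" "W O W \<subseteq> V"
    using uniformity_on_half[OF assms] by blast
  have "W \<inter> W\<inverse> \<in> \<U>"
    using W(1) assms(1) by (simp add: uniformity_on_Int uniformity_on_converse)
  moreover have "(W \<inter> W\<inverse>) O (W \<inter> W\<inverse>) \<subseteq> V"
    using W(2) by blast
  ultimately show ?thesis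
    by (intro bexI[of _ "W \<inter> W\<inverse>"]) auto
qed

lemma uniformity_on_third:
  assumes "uniformity_on S \<U>" "V \<in> \<U>"
  shows "\<exists>W\<in>\<U>. W O W O W \<subseteq> V"
proof -
  obtain W2 where W2: "W2 \<in> \<U>" "W2 O W2 \<subseteq> V"
    using uniformity_on_half[OF assms] by blast
  obtain W where W: "W \<in> \<U>" "W O W \<subseteq> W2"
    using uniformity_on_half[OF assms(1) W2(1)] by blast
  have "W O W O W \<subseteq> W2 O W2"
    using uniformity_on_subset_relcomp[OF assms(1) W(1)] W(2) by (intro relcomp_mono) auto
  with W(1) W2(2) show ?thesis
    by blast
qed

lemma uniformity_on_Inter:
  assumes "uniformity_on S \<U>" "finite \<F>" "\<F> \<noteq> {}" "\<F> \<subseteq> \<U>"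
  shows "\<Inter>\<F> \<in> \<U>"
  using assms(2-4)
  by (induction \<F> rule: finite_ne_induct) (auto intro: uniformity_on_Int[OF assms(1)])

lemma compatible_uniformity_uniformity_on:
  "compatible_uniformity X \<U> \<Longrightarrow> uniformity_on (topspace X) \<U>"
  unfolding compatible_uniformity_def by blast

lemma compatible_uniformity_openin:
  "compatible_uniformity X \<U> \<Longrightarrow>
     openin X G \<longleftrightarrow> G \<subseteq> topspace X \<and> (\<forall>x\<in>G. \<exists>V\<in>\<U>. V `` {x} \<subseteq> G)"
  unfolding compatible_uniformity_def by blast

lemma compatible_uniformity_interior_of:
  assumes "compatible_uniformity X \<U>"
  shows "y \<in> X interior_of M \<longleftrightarrow> y \<in> topspace X \<and> (\<exists>V\<in>\<U>. V `` {y} \<subseteq> M)"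
proof
  assume y: "y \<in> X interior_of M"
  then obtain V where V: "V \<in> \<U>" "V `` {y} \<subseteq> X interior_of M"
    using compatible_uniformity_openin[OF assms] openin_interior_of by blast
  have "V `` {y} \<subseteq> M"
    using V(2) interior_of_subset by (rule subset_trans)
  moreover have "y \<in> topspace X"
    using interior_of_subset_topspace y by (rule subsetD)
  ultimately show "y \<in> topspace X \<and> (\<exists>V\<in>\<U>. V `` {y} \<subseteq> M)"
    using V(1) by blast
next
  have un: "uniformity_on (topspace X) \<U>"
    using assms by (rule compatible_uniformity_uniformity_on)
  define G where "G = {z \<in> topspace X. \<exists>V\<in>\<U>. V `` {z} \<subseteq> M}"
  have "openin X G"
    unfolding compatible_uniformity_openin[OF assms]
  proof (intro conjI ballI)
    fix z assume "z \<in> G"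
    then obtain V where V: "V \<in> \<U>" "V `` {z} \<subseteq> M"
      unfolding G_def by blast
    obtain W where W: "W \<in> \<U>" "W O W \<subseteq> V"
      using uniformity_on_half[OF un V(1)] by blast
    have "W `` {w} \<subseteq> M" if "w \<in> W `` {z}" for w
      using that V(2) W(2) by blast
    then show "\<exists>W\<in>\<U>. W `` {z} \<subseteq> G"
      using W(1) uniformity_on_subset[OF un W(1)] unfolding G_def by blast
  qed (auto simp: G_def)
  moreover have "G \<subseteq> M"
    unfolding G_def using uniformity_on_refl[OF un] by blast
  moreover assume "y \<in> topspace X \<and> (\<exists>V\<in>\<U>. V `` {y} \<subseteq> M)"
  then have "y \<in> G"
    unfolding G_def by blast
  ultimately show "y \<in> X interior_of M"
    using interior_of_maximal by blast
qed

lemma totally_bounded_in_interior_cover: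
  assumes "compatible_uniformity X \<U>" "totally_bounded_in \<U> A" "P \<in> \<U>"
  shows "\<exists>F. finite F \<and> F \<subseteq> A \<and> A \<subseteq> (\<Union>x\<in>F. X interior_of (P `` {x}))"
proof -
  have un: "uniformity_on (topspace X) \<U>"
    using assms(1) by (rule compatible_uniformity_uniformity_on)
  obtain W where W: "W \<in> \<U>" "W O W \<subseteq> P"
    using uniformity_on_half[OF un assms(3)] by blast
  have "\<exists>F. finite F \<and> F \<subseteq> A \<and> A \<subseteq> (\<Union>x\<in>F. W `` {x})"
    using assms(2) W(1) unfolding totally_bounded_in_def by (rule bspec)
  then obtain F where F: "finite F" "F \<subseteq> A" "A \<subseteq> (\<Union>x\<in>F. W `` {x})"
    by blast
  have "W `` {x} \<subseteq> X interior_of (P `` {x})" for x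
  proof
    fix a assume a: "a \<in> W `` {x}"
    then have "W `` {a} \<subseteq> P `` {x}"
      using W(2) by blast
    moreover have "a \<in> topspace X"
      using a uniformity_on_subset[OF un W(1)] by blast
    ultimately show "a \<in> X interior_of (P `` {x})"
      using W(1) compatible_uniformity_interior_of[OF assms(1)] by blast
  qed
  note interior = this
  have "A \<subseteq> (\<Union>x\<in>F. X interior_of (P `` {x}))"
  proof
    fix a assume "a \<in> A"
    then obtain x where "x \<in> F" "a \<in> W `` {x}"
      using F(3) by blast
    then show "a \<in> (\<Union>x\<in>F. X interior_of (P `` {x}))"
      using interior by blast
  qed
  with F(1,2) show ?thesis
    by (intro exI[of _ F] conjI)
qed

lemma base_of_top_subtopology_interiors:
  assumes compat: "compatible_uniformity X \<U>"
    and refines: "\<forall>V\<in>\<U>. \<exists>P\<in>\<B>. P \<inter> (A \<times> A) \<subseteq> V"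
    and nets: "\<forall>P\<in>\<B>. F P \<subseteq> A \<and> A \<subseteq> (\<Union>x\<in>F P. X interior_of (P `` {x}))"
  shows "base_of_top (subtopology X A)
           ((\<lambda>(P, x). A \<inter> X interior_of (P `` {x})) ` Sigma \<B> F)"
  unfolding base_of_top_def
proof (intro conjI ballI allI impI)
  fix G assume "G \<in> (\<lambda>(P, x). A \<inter> X interior_of (P `` {x})) ` Sigma \<B> F"
  then show "openin (subtopology X A) G"
    by (auto intro: openin_subtopology_Int2)
next
  have un: "uniformity_on (topspace X) \<U>"
    using compat by (rule compatible_uniformity_uniformity_on)
  fix G a assume "openin (subtopology X A) G \<and> a \<in> G"
  then obtain T where T: "openin X T" "G = T \<inter> A" and a: "a \<in> T" "a \<in> A"
    by (auto simp: openin_subtopology)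
  obtain V where V: "V \<in> \<U>" "V `` {a} \<subseteq> T"
    using compatible_uniformity_openin[OF compat] T(1) a(1) by blast
  obtain W where W: "W \<in> \<U>" "W\<inverse> = W" "W O W \<subseteq> V"
    using uniformity_on_symmetric_half[OF un V(1)] by blast
  obtain P where P: "P \<in> \<B>" "P \<inter> (A \<times> A) \<subseteq> W"
    using refines W(1) by blast
  obtain x where x: "x \<in> F P" "a \<in> X interior_of (P `` {x})"
    using nets P(1) a(2) by blast
  have "x \<in> A"
    using nets P(1) x(1) by blast
  have "(x, a) \<in> P"
    using subsetD[OF interior_of_subset x(2)] by simp
  then have "(x, a) \<in> W"
    using \<open>x \<in> A\<close> a(2) P(2) by blast
  then have "(a, x) \<in> W"
    using W(2) by blast
  have "A \<inter> X interior_of (P `` {x}) \<subseteq> G"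
  proof
    fix y assume y: "y \<in> A \<inter> X interior_of (P `` {x})"
    then have "(x, y) \<in> P"
      using subsetD[OF interior_of_subset] by fastforce
    then have "(x, y) \<in> W"
      using y \<open>x \<in> A\<close> P(2) by blast
    with \<open>(a, x) \<in> W\<close> have "(a, y) \<in> V"
      using W(3) by blast
    with y show "y \<in> G"
      using V(2) T(2) by blast
  qed
  with x P(1) a show "\<exists>B\<in>(\<lambda>(P, x). A \<inter> X interior_of (P `` {x})) ` Sigma \<B> F. a \<in> B \<and> B \<subseteq> G"
    by blast
qed

definition cube_independent_on :: "'a set \<Rightarrow> ('a \<times> 'a) set \<Rightarrow> ('a \<times> 'a) set \<Rightarrow> bool" where
  "cube_independent_on A P Q \<longleftrightarrow>
     \<not> (P \<inter> (A \<times> A) \<subseteq> Q O Q O Q \<and> Q \<inter> (A \<times> A) \<subseteq> P O P O P)"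

lemma cube_independent_on_commute: "cube_independent_on A P Q \<longleftrightarrow> cube_independent_on A Q P"
  unfolding cube_independent_on_def by (simp add: conj_commute)

definition net_pattern :: "'a set \<Rightarrow> ('a \<times> 'a) set \<Rightarrow> 'a set \<Rightarrow> ('a \<times> 'a) set \<Rightarrow> ('a \<times> 'a) set" where
  "net_pattern F W A P =
     {(x, y) \<in> F \<times> F. \<exists>a\<in>A. \<exists>b\<in>A. (x, a) \<in> W \<and> (y, b) \<in> W \<and> (a, b) \<in> P}"

lemma net_pattern_subset_imp_subset_cube:
  assumes "W\<inverse> = W" "W O W \<subseteq> Q" "A \<subseteq> (\<Union>x\<in>F. W `` {x})"
    and "net_pattern F W A P \<subseteq> net_pattern F W A Q"
  shows "P \<inter> (A \<times> A) \<subseteq> Q O Q O Q"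
proof safe
  fix a b assume ab: "(a, b) \<in> P" "a \<in> A" "b \<in> A"
  obtain x y where "x \<in> F" "(x, a) \<in> W" "y \<in> F" "(y, b) \<in> W"
    using assms(3) ab(2,3) by blast
  with ab have "(x, y) \<in> net_pattern F W A Q"
    using assms(4) unfolding net_pattern_def by blast
  then obtain a' b' where "(x, a') \<in> W" "(y, b') \<in> W" "(a', b') \<in> Q"
    unfolding net_pattern_def by blast
  have "(a, a') \<in> Q"
    using \<open>(x, a) \<in> W\<close> \<open>(x, a') \<in> W\<close> assms(1,2) by blast
  moreover have "(b', b) \<in> Q"
    using \<open>(y, b) \<in> W\<close> \<open>(y, b') \<in> W\<close> assms(1,2) by blast
  ultimately show "(a, b) \<in> Q O Q O Q"
    using \<open>(a', b') \<in> Q\<close> by blast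
qed

lemma infinite_bounded_family_not_pairwise_independent:
  assumes un: "uniformity_on S \<U>" and tb: "totally_bounded_in \<U> A"
    and "V \<in> \<U>" "infinite \<T>" "\<forall>P\<in>\<T>. V \<subseteq> P"
  shows "\<not> pairwise (cube_independent_on A) \<T>"
proof -
  obtain W where W: "W \<in> \<U>" "W\<inverse> = W" "W O W \<subseteq> V"
    using uniformity_on_symmetric_half[OF un \<open>V \<in> \<U>\<close>] by blast
  obtain F where F: "finite F" "A \<subseteq> (\<Union>x\<in>F. W `` {x})"
    using tb W(1) unfolding totally_bounded_in_def by blast
  have "net_pattern F W A ` \<T> \<subseteq> Pow (F \<times> F)"
    unfolding net_pattern_def by blast
  then have "finite (net_pattern F W A ` \<T>)"
    using F(1) by (simp add: finite_subset)
  then have "\<not> inj_on (net_pattern F W A) \<T>"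
    using \<open>infinite \<T>\<close> finite_imageD by blast
  then obtain P Q where PQ: "P \<in> \<T>" "Q \<in> \<T>" "P \<noteq> Q"
      "net_pattern F W A P = net_pattern F W A Q"
    unfolding inj_on_def by blast
  have "W O W \<subseteq> P" "W O W \<subseteq> Q"
    using PQ(1,2) W(3) assms(5) by blast+
  then have "\<not> cube_independent_on A P Q"
    unfolding cube_independent_on_def
    using net_pattern_subset_imp_subset_cube[OF W(2) _ F(2)] PQ(4) by blast
  with PQ(1-3) show ?thesis
    unfolding pairwise_def by blast
qed

lemma pairwise_maximal_exists:
  obtains M where "M \<subseteq> A" "pairwise R M" "\<And>x. x \<in> A - M \<Longrightarrow> \<not> pairwise R (insert x M)"
proof -
  let ?\<P> = "{M. M \<subseteq> A \<and> pairwise R M}"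
  have "\<forall>C\<in>chains ?\<P>. \<Union>C \<in> ?\<P>"
    unfolding chains_def by (auto intro: pairwise_chain_Union)
  then obtain M where M: "M \<in> ?\<P>" and max: "\<forall>N\<in>?\<P>. M \<subseteq> N \<longrightarrow> N = M"
    by (rule Zorn_Lemma[THEN bexE])
  have "\<not> pairwise R (insert x M)" if "x \<in> A - M" for x
  proof
    assume "pairwise R (insert x M)"
    then have "insert x M \<in> ?\<P>"
      using M that by blast
    with max have "insert x M = M"
      by blast
    with that show False
      by blast
  qed
  with M that show ?thesis
    by blast
qed

lemma card_of_subset_cardSuc:
  assumes "\<not> |M| \<le>o |K|"
  shows "\<exists>S\<subseteq>M. |S| =o cardSuc |K|"
proof -
  have field: "|Field (cardSuc |K| )| =o cardSuc |K|"
    by (simp add: card_of_Field_ordIso cardSuc_Card_order card_of_Card_order)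
  have "|K| <o |M|"
    using assms by (simp add: not_ordLeq_iff_ordLess card_of_Well_order)
  then have "cardSuc |K| \<le>o |M|"
    by (simp add: cardSuc_ordLess_ordLeq card_of_Card_order)
  then obtain S where "S \<subseteq> M" "|Field (cardSuc |K| )| =o |S|"
    using internalize_card_of_ordLeq2[THEN iffD1, OF ordIso_ordLeq_trans[OF field]] by blast
  then show ?thesis
    using ordIso_transitive[OF ordIso_symmetric field] by blast
qed

lemma calibre_succ_omegaD:
  assumes "calibre_succ_omega \<U> K" "S \<subseteq> \<U>" "|S| =o cardSuc |K|"
  obtains \<T> V where "\<T> \<subseteq> S" "infinite \<T>" "V \<in> \<U>" "\<forall>W\<in>\<T>. V \<subseteq> W"
proof -
  have "\<exists>\<T>\<subseteq>S. infinite \<T> \<and> countable \<T> \<and> (\<exists>V\<in>\<U>. \<forall>W\<in>\<T>. V \<subseteq> W)"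
    using assms(1)[unfolded calibre_succ_omega_def, rule_format, OF assms(2,3)] .
  with that show ?thesis
    by blast
qed

lemma pairwise_cube_independent_card_le:
  assumes un: "uniformity_on S \<U>" and tb: "totally_bounded_in \<U> A"
    and cal: "calibre_succ_omega \<U> K"
    and "M \<subseteq> \<U>" "pairwise (cube_independent_on A) M"
  shows "|M| \<le>o |K|"
proof (rule ccontr)
  assume "\<not> |M| \<le>o |K|"
  then obtain S where "S \<subseteq> M" "|S| =o cardSuc |K|"
    using card_of_subset_cardSuc by blast
  moreover have "S \<subseteq> \<U>"
    using \<open>S \<subseteq> M\<close> \<open>M \<subseteq> \<U>\<close> by (rule subset_trans)
  ultimately obtain \<T> V where "\<T> \<subseteq> M" "infinite \<T>" "V \<in> \<U>" "\<forall>P\<in>\<T>. V \<subseteq> P"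
    using calibre_succ_omegaD[OF cal] by (metis subset_trans)
  moreover have "pairwise (cube_independent_on A) \<T>"
    using \<open>\<T> \<subseteq> M\<close> assms(5) pairwise_subset by blast
  ultimately show False
    using infinite_bounded_family_not_pairwise_independent[OF un tb] by blast
qed

lemma maximal_cube_independent_refines:
  assumes un: "uniformity_on S \<U>" and "M \<subseteq> \<U>"
    and max: "\<And>W. W \<in> \<U> - M \<Longrightarrow> \<not> pairwise (cube_independent_on A) (insert W M)"
    and "pairwise (cube_independent_on A) M" "V \<in> \<U>"
  shows "\<exists>P\<in>M. P \<inter> (A \<times> A) \<subseteq> V"
proof -
  obtain W where W: "W \<in> \<U>" "W O W O W \<subseteq> V"
    using uniformity_on_third[OF un \<open>V \<in> \<U>\<close>] by blast
  show ?thesis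
  proof (cases "W \<in> M")
    case True
    moreover have "W \<subseteq> V"
      using uniformity_on_subset_relcomp[OF un W(1)] W(2) by blast
    ultimately show ?thesis
      by blast
  next
    case False
    then have "\<not> pairwise (cube_independent_on A) (insert W M)"
      using max W(1) by blast
    then obtain P where "P \<in> M" "\<not> cube_independent_on A P W"
      using assms(4) cube_independent_on_commute unfolding pairwise_insert by blast
    with W(2) show ?thesis
      unfolding cube_independent_on_def by blast
  qed
qed

lemma calibre_succ_omega_trace_base:
  assumes un: "uniformity_on S \<U>" and tb: "totally_bounded_in \<U> A"
    and cal: "calibre_succ_omega \<U> K"
  shows "\<exists>\<B>\<subseteq>\<U>. |\<B>| \<le>o |K| \<and> (\<forall>V\<in>\<U>. \<exists>P\<in>\<B>. P \<inter> (A \<times> A) \<subseteq> V)"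
proof -
  obtain M where M: "M \<subseteq> \<U>" "pairwise (cube_independent_on A) M"
    and max: "\<And>W. W \<in> \<U> - M \<Longrightarrow> \<not> pairwise (cube_independent_on A) (insert W M)"
    using pairwise_maximal_exists[of \<U> "cube_independent_on A"] by blast
  have "|M| \<le>o |K|"
    by (rule pairwise_cube_independent_card_le[OF un tb cal M])
  moreover have "\<forall>V\<in>\<U>. \<exists>P\<in>M. P \<inter> (A \<times> A) \<subseteq> V"
    using maximal_cube_independent_refines[OF un M(1) max M(2)] by blast
  ultimately show ?thesis
    using M(1) by blast
qed

lemma weight_le_subtopology_infinite:
  assumes compat: "compatible_uniformity X \<U>" and tb: "totally_bounded_in \<U> A"
    and cal: "calibre_succ_omega \<U> K" and "infinite K"
  shows "weight_le (subtopology X A) K"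
proof -
  obtain \<B> where \<B>: "\<B> \<subseteq> \<U>" "|\<B>| \<le>o |K|" "\<forall>V\<in>\<U>. \<exists>P\<in>\<B>. P \<inter> (A \<times> A) \<subseteq> V"
    using calibre_succ_omega_trace_base[OF compatible_uniformity_uniformity_on[OF compat] tb cal]
    by blast
  have "\<forall>P\<in>\<B>. \<exists>F. finite F \<and> F \<subseteq> A \<and> A \<subseteq> (\<Union>x\<in>F. X interior_of (P `` {x}))"
    using totally_bounded_in_interior_cover[OF compat tb] \<B>(1) by blast
  from bchoice[OF this] obtain F
    where F: "\<forall>P\<in>\<B>. finite (F P) \<and> F P \<subseteq> A \<and> A \<subseteq> (\<Union>x\<in>F P. X interior_of (P `` {x}))"
    ..
  have "|F P| \<le>o |K|" if "P \<in> \<B>" for P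
  proof (intro ordLess_imp_ordLeq finite_ordLess_infinite card_of_Well_order)
    show "finite (Field |F P| )"
      using F that by (simp add: Field_card_of)
    show "infinite (Field |K| )"
      using \<open>infinite K\<close> by (simp add: Field_card_of)
  qed
  then have "|Sigma \<B> F| \<le>o |K|"
    using card_of_Sigma_ordLeq_infinite[OF \<open>infinite K\<close> \<B>(2)] by blast
  then have "|(\<lambda>(P, x). A \<inter> X interior_of (P `` {x})) ` Sigma \<B> F| \<le>o |K|"
    using card_of_image ordLeq_transitive by blast
  moreover have "base_of_top (subtopology X A) ((\<lambda>(P, x). A \<inter> X interior_of (P `` {x})) ` Sigma \<B> F)"
    using base_of_top_subtopology_interiors[OF compat \<B>(3)] F by blast
  ultimately show ?thesis
    unfolding weight_le_def by blast
qed

lemma calibre_succ_omega_finite_card_le: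
  assumes "calibre_succ_omega \<U> K" "finite K"
  shows "|\<U>| \<le>o |K|"
proof (rule ccontr)
  assume "\<not> |\<U>| \<le>o |K|"
  then obtain S where S: "S \<subseteq> \<U>" "|S| =o cardSuc |K|"
    using card_of_subset_cardSuc by blast
  have "|S| =o |Field (cardSuc |K| )|"
    using S(2) ordIso_symmetric ordIso_transitive
    by (blast intro: card_of_Field_ordIso cardSuc_Card_order card_of_Card_order)
  then have "finite S"
    using card_of_ordIso_finite card_of_cardSuc_finite \<open>finite K\<close> by blast
  moreover obtain \<T> where "\<T> \<subseteq> S" "infinite \<T>"
    using calibre_succ_omegaD[OF assms(1) S] .
  ultimately show False
    using finite_subset by blast
qed

lemma compatible_uniformity_finite_Id_on:
  assumes "t1_space X" "compatible_uniformity X \<U>" "finite \<U>"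
  shows "Id_on (topspace X) \<in> \<U>"
proof -
  have un: "uniformity_on (topspace X) \<U>"
    using assms(2) by (rule compatible_uniformity_uniformity_on)
  have "\<Inter>\<U> \<in> \<U>"
    using uniformity_on_Inter[OF un assms(3) uniformity_on_nonempty[OF un]] by blast
  moreover have "\<Inter>\<U> \<subseteq> Id_on (topspace X)"
  proof safe
    fix x y assume xy: "(x, y) \<in> \<Inter>\<U>"
    then have "x \<in> topspace X" "y \<in> topspace X"
      using uniformity_on_subset[OF un \<open>\<Inter>\<U> \<in> \<U>\<close>] by auto
    moreover have "x = y"
    proof (rule ccontr)
      assume "x \<noteq> y"
      then obtain G where "openin X G" "x \<in> G" "y \<notin> G"
        using assms(1) \<open>x \<in> topspace X\<close> \<open>y \<in> topspace X\<close> unfolding t1_space_def by blast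
      then obtain V where "V \<in> \<U>" "V `` {x} \<subseteq> G"
        using compatible_uniformity_openin[OF assms(2)] by blast
      with xy \<open>y \<notin> G\<close> show False
        by blast
    qed
    ultimately show "(x, y) \<in> Id_on (topspace X)"
      by blast
  qed
  ultimately show ?thesis
    using uniformity_on_superset[OF un] by blast
qed

lemma uniformity_on_Id_on_card_le:
  assumes "uniformity_on S \<U>" "Id_on S \<in> \<U>"
  shows "|S| \<le>o |\<U>|"
proof -
  have "inj_on (\<lambda>a. Id_on S \<union> {a} \<times> S) S"
  proof (rule inj_onI)
    fix a b assume "a \<in> S" "b \<in> S" and eq: "Id_on S \<union> {a} \<times> S = Id_on S \<union> {b} \<times> S"
    have "(a, b) \<in> Id_on S \<union> {a} \<times> S"
      using \<open>b \<in> S\<close> by blast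
    then show "a = b"
      unfolding eq by blast
  qed
  moreover have "(\<lambda>a. Id_on S \<union> {a} \<times> S) ` S \<subseteq> \<U>"
  proof (rule image_subsetI)
    fix a assume "a \<in> S"
    then show "Id_on S \<union> {a} \<times> S \<in> \<U>"
      by (intro uniformity_on_superset[OF assms]) auto
  qed
  ultimately show ?thesis
    using card_of_ordLeq by blast
qed

lemma weight_le_discrete_topology:
  assumes "|A| \<le>o |K|"
  shows "weight_le (discrete_topology A) K"
proof -
  have "base_of_top (discrete_topology A) ((\<lambda>a. {a}) ` A)"
    unfolding base_of_top_def by auto
  moreover have "|(\<lambda>a. {a}) ` A| \<le>o |K|"
    using assms card_of_image ordLeq_transitive by blast
  ultimately show ?thesis
    unfolding weight_le_def by blast
qed

lemma weight_le_subtopology_finite: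
  assumes "t1_space X" and compat: "compatible_uniformity X \<U>" and "A \<subseteq> topspace X"
    and cal: "calibre_succ_omega \<U> K" and "finite K"
  shows "weight_le (subtopology X A) K"
proof -
  have un: "uniformity_on (topspace X) \<U>"
    using compat by (rule compatible_uniformity_uniformity_on)
  have "|\<U>| \<le>o |K|"
    using calibre_succ_omega_finite_card_le[OF cal \<open>finite K\<close>] .
  then have Id: "Id_on (topspace X) \<in> \<U>"
    using compatible_uniformity_finite_Id_on[OF assms(1) compat] card_of_ordLeq_finite
      \<open>finite K\<close> by blast
  then have "X = discrete_topology (topspace X)"
    unfolding topology_eq openin_discrete_topology compatible_uniformity_openin[OF compat]
    by blast
  then have "subtopology X A = discrete_topology A"
    by (metis \<open>A \<subseteq> topspace X\<close> inf.absorb_iff2 subtopology_discrete_topology)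
  moreover have "|A| \<le>o |K|"
    using ordLeq_transitive[OF ordLeq_transitive[OF card_of_mono1[OF \<open>A \<subseteq> topspace X\<close>]
      uniformity_on_Id_on_card_le[OF un Id]] \<open>|\<U>| \<le>o |K|\<close>] .
  ultimately show ?thesis
    using weight_le_discrete_topology by simp
qed

theorem mainTheorem8:
  fixes X :: "'a topology" and \<U> :: "('a \<times> 'a) set set" and K :: "'k set" and A :: "'a set"
  assumes "Tychonoff_space X"
    and "compatible_uniformity X \<U>"
    and "A \<subseteq> topspace X"
    and "totally_bounded_in \<U> A"
    and "calibre_succ_omega \<U> K"
  shows "weight_le (subtopology X A) K"
proof (cases "finite K")
  case True
  moreover have "t1_space X"
    using assms(1) unfolding Tychonoff_space_def by simp
  ultimately show ?thesis
    using weight_le_subtopology_finite assms(2,3,5) by blast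
next
  case False
  then show ?thesis
    using weight_le_subtopology_infinite assms(2,4,5) by blast
qed

end
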